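(* Let $\mathcal F$ be the set of ordered pairs of reduced fractions $\left(\frac ab,\frac cd\right)$ (with $a,c\ge 0$, $b,d\ge1$ integers) such that $0\le \frac ab<\frac cd\le 1$ and $ad-bc=-1$, and let $\mathcal F^*=\{(\frac01,\frac1n): n\in\mathbb N\}$. Then \[ \sum_{\left(\frac ab,\frac cd\right)\in\mathcal F\setminus\mathcal F^*}\frac{ab+cd+(a+c)(b+d)}{\big(abcd(a+c)(b+d)\big)^2}=7-12\gamma, \] where $\gamma$ is the Euler–Mascheroni constant.
   Context: $\mathcal F$ is the set of pairs of consecutive Farey fractions in $[0,1]$. *)

theory Defs
  imports "HOL-Analysis.Analysis"
begin

definition farey_pairs :: "((int \<times> int) \<times> (int \<times> int)) set" where
  "farey_pairs = {((a, b), (c, d)). a \<ge> 0 \<and> c \<ge> 0 \<and> b \<ge> 1 \<and> d \<ge> 1 \<and>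
      coprime a b \<and> coprime c d \<and>
      0 \<le> real_of_int a / real_of_int b \<and>
      real_of_int a / real_of_int b < real_of_int c / real_of_int d \<and>
      real_of_int c / real_of_int d \<le> 1 \<and>
      a * d - b * c = -1}"

definition farey_pairs_star :: "((int \<times> int) \<times> (int \<times> int)) set" where
  "farey_pairs_star = {((0, 1), (1, int n)) | n :: nat. n \<ge> 1}"

definition farey_term :: "((int \<times> int) \<times> (int \<times> int)) \<Rightarrow> real" where
  "farey_term p = (case p of ((a, b), (c, d)) \<Rightarrow>
     real_of_int (a * b + c * d + (a + c) * (b + d)) /
     (real_of_int (a * b * c * d * (a + c) * (b + d)))\<^sup>2)"

end

theory Submission
  imports Defs
begin

text \<open>
  For a Farey pair x = a/b < y = c/d with mediant m = (a+c)/(b+d), put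
  H(r) = r^2 - r^-2 - 8 (r - r^-1) + 12 ln r. The summand of the pair equals
  H(y/x) - H(m/x) - H(y/m): the potential H(y/x) of the pair minus the potentials of its two
  Stern-Brocot children. Every pair of F - F* lies below exactly one root (1/(n+1), 1/n), so the sum
  over the pairs with b + d \<le> N telescopes to the potentials of the roots with n < N minus the
  potentials of the pairs with max(b, d) \<le> N < b + d. For the latter y/x = 1 + 1/(ad) with
  2ad \<ge> N, and H'(r) = 2 (r-1)^4 / r^3 gives 0 \<le> H(r) \<le> (r-1)^5, so they contribute O(1/N).
  Finally H((n+1)/n) = 12 (ln (1 + 1/n) - 1/n) + 6 (1/n - 1/(n+1)) + (1/n^2 - 1/(n+1)^2),
  whose sum over n is -12 \<gamma> + 6 + 1.
\<close>

lemma has_sum_nonneg_exhaustion: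
  fixes f :: "'a \<Rightarrow> real"
  assumes nonneg: "\<And>x. x \<in> A \<Longrightarrow> 0 \<le> f x"
    and finite: "\<And>n. finite (S n)" and subset: "\<And>n. S n \<subseteq> A" and "incseq S"
    and exhausting: "\<And>X. finite X \<Longrightarrow> X \<subseteq> A \<Longrightarrow> \<exists>n. X \<subseteq> S n"
    and lim: "(\<lambda>n. sum f (S n)) \<longlonglongrightarrow> s"
  shows "(f has_sum s) A"
proof -
  have sum_le: "sum f X \<le> sum f Y" if "X \<subseteq> Y" "finite Y" "Y \<subseteq> A" for X Y
    using that nonneg by (intro sum_mono2) auto
  have "incseq (\<lambda>n. sum f (S n))"
    using \<open>incseq S\<close> finite subset unfolding incseq_def by (blast intro: sum_le)
  then have le_s: "sum f (S n) \<le> s" for n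
    using lim by (rule incseq_le)
  show ?thesis
    unfolding has_sum_def
  proof (rule order_tendstoI)
    fix a assume "a < s"
    then obtain n where "a < sum f (S n)"
      using order_tendstoD(1)[OF lim] by (meson eventually_sequentially order.refl)
    then show "\<forall>\<^sub>F X in finite_subsets_at_top A. a < sum f X"
      unfolding eventually_finite_subsets_at_top
      using finite subset by (meson order.strict_trans2 sum_le)
  next
    fix a assume "s < a"
    show "\<forall>\<^sub>F X in finite_subsets_at_top A. sum f X < a"
    proof (rule eventually_finite_subsets_at_top_weakI)
      fix X assume "finite X" "X \<subseteq> A"
      then obtain n where "X \<subseteq> S n"
        using exhausting by blast
      then have "sum f X \<le> sum f (S n)"
        using finite subset by (rule sum_le)
      with le_s[of n] \<open>s < a\<close> show "sum f X < a"
        by linarith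
    qed
  qed
qed

definition farey_potential :: "real \<Rightarrow> real" where
  "farey_potential r = r\<^sup>2 - 1 / r\<^sup>2 - 8 * (r - 1 / r) + 12 * ln r"

lemma farey_potential_one [simp]: "farey_potential 1 = 0"
  by (simp add: farey_potential_def)

lemma farey_potential_divide:
  fixes w z :: real
  assumes "0 < w" "0 < z"
  shows "farey_potential (w / z) = (w / z)\<^sup>2 - (z / w)\<^sup>2 - 8 * (w / z - z / w) + 12 * (ln w - ln z)"
  using assms by (simp add: farey_potential_def ln_div power_divide)

lemma farey_potential_has_real_derivative:
  assumes "r > 0"
  shows "(farey_potential has_real_derivative 2 * (r - 1) ^ 4 / r ^ 3) (at r)"
proof -
  have "(farey_potential has_real_derivative 2 * r + 2 / r ^ 3 - 8 - 8 / r\<^sup>2 + 12 / r) (at r)"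
    unfolding farey_potential_def using assms
    by (auto intro!: derivative_eq_intros simp: field_simps power2_eq_square power3_eq_cube)
  also have "2 * r + 2 / r ^ 3 - 8 - 8 / r\<^sup>2 + 12 / r = 2 * (r - 1) ^ 4 / r ^ 3"
    using assms by (simp add: field_simps power2_eq_square power3_eq_cube power4_eq_xxxx)
  finally show ?thesis .
qed

lemma farey_potential_nonneg:
  assumes "1 \<le> r"
  shows "0 \<le> farey_potential r"
proof -
  have "farey_potential 1 \<le> farey_potential r"
  proof (rule DERIV_nonneg_imp_nondecreasing[OF assms])
    fix t :: real assume "1 \<le> t"
    then show "\<exists>y. (farey_potential has_real_derivative y) (at t) \<and> 0 \<le> y"
      using farey_potential_has_real_derivative[of t]
      by (intro exI[of _ "2 * (t - 1) ^ 4 / t ^ 3"]) simp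
  qed
  then show ?thesis
    by simp
qed

lemma farey_potential_le:
  assumes "1 \<le> r"
  shows "farey_potential r \<le> (r - 1) ^ 5"
proof -
  define g where "g t = (t - 1) ^ 5 - farey_potential t" for t :: real
  have "g 1 \<le> g r"
  proof (rule DERIV_nonneg_imp_nondecreasing[OF assms])
    fix t :: real assume "1 \<le> t"
    then have deriv: "(g has_real_derivative 5 * (t - 1) ^ 4 - 2 * (t - 1) ^ 4 / t ^ 3) (at t)"
      unfolding g_def by (auto intro!: derivative_eq_intros farey_potential_has_real_derivative)
    have "2 * (t - 1) ^ 4 / t ^ 3 \<le> 2 * (t - 1) ^ 4 / 1"
      using \<open>1 \<le> t\<close> by (intro divide_left_mono) (auto simp: one_le_power)
    moreover have "0 \<le> (t - 1) ^ 4"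
      by simp
    ultimately have "0 \<le> 5 * (t - 1) ^ 4 - 2 * (t - 1) ^ 4 / t ^ 3"
      by linarith
    with deriv show "\<exists>y. (g has_real_derivative y) (at t) \<and> 0 \<le> y"
      by blast
  qed
  then show ?thesis
    by (simp add: g_def)
qed

lemma farey_potential_cocycle:
  fixes x m y :: real
  assumes "0 < x" "0 < m" "0 < y"
  shows "farey_potential (y / x) - farey_potential (m / x) - farey_potential (y / m) =
    (y - x) * (m - x) * (y - m) * (x * (y - m)\<^sup>2 + y * (m - x)\<^sup>2 + m * (y - x)\<^sup>2) / (x * y * m)\<^sup>2"
  using assms by (simp add: farey_potential_divide field_simps power2_eq_square)

lemma farey_potential_succ_div:
  fixes z :: real
  assumes "z > 0"
  shows "farey_potential ((z + 1) / z) =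
    12 * (ln (z + 1) - ln z - 1 / z) + 6 * (1 / z - 1 / (z + 1)) + (1 / z\<^sup>2 - 1 / (z + 1)\<^sup>2)"
proof -
  have potential: "farey_potential ((z + 1) / z) = ((z + 1) / z)\<^sup>2 - (z / (z + 1))\<^sup>2
      - 8 * ((z + 1) / z - z / (z + 1)) + 12 * (ln (z + 1) - ln z)"
    by (rule farey_potential_divide) (use assms in auto)
  have quotients: "(z + 1) / z = 1 + 1 / z" "z / (z + 1) = 1 - 1 / (z + 1)"
    using assms by (simp_all add: field_simps)
  show ?thesis
    unfolding potential unfolding quotients
    by (simp add: power2_eq_square power_divide algebra_simps)
qed

lemma sums_farey_potential_succ_div:
  "(\<lambda>n. farey_potential ((real n + 2) / (real n + 1))) sums (7 - 12 * euler_mascheroni)"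
proof -
  define u where "u n = inverse (real (Suc n))" for n
  have "u \<longlonglongrightarrow> 0"
    unfolding u_def by (rule LIMSEQ_inverse_real_of_nat)
  then have "(\<lambda>n. -12 * (inverse (real (n + 1)) + ln (real (n + 1)) - ln (real (n + 2)))
      + 6 * (u n - u (Suc n)) + ((u n)\<^sup>2 - (u (Suc n))\<^sup>2))
      sums (-12 * euler_mascheroni + 6 * (u 0 - 0) + ((u 0)\<^sup>2 - 0\<^sup>2))"
    by (intro sums_add sums_mult euler_mascheroni_sum_real telescope_sums' tendsto_power)
  moreover have "farey_potential ((real n + 2) / (real n + 1)) =
      -12 * (inverse (real (n + 1)) + ln (real (n + 1)) - ln (real (n + 2)))
      + 6 * (u n - u (Suc n)) + ((u n)\<^sup>2 - (u (Suc n))\<^sup>2)" for n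
    using farey_potential_succ_div[of "real n + 1"]
    by (simp add: u_def inverse_eq_divide power_one_over add_ac)
  ultimately show ?thesis
    by (simp add: u_def)
qed

type_synonym farey_pair = "(int \<times> int) \<times> (int \<times> int)"

definition farey_pairs_pos :: "farey_pair set" where
  "farey_pairs_pos = {((a, b), (c, d)). 1 \<le> a \<and> a < b \<and> 1 \<le> c \<and> c \<le> d \<and> b * c - a * d = 1}"

lemma coprime_if_det_eq_one:
  fixes a b c d :: int
  assumes "b * c - a * d = 1"
  shows "coprime a b" "coprime c d"
  using assms
  by (metis add.commute coprime_add_one_right coprime_commute coprime_mult_right_iff
      diff_add_cancel)+

lemma farey_pairs_diff_star: "farey_pairs - farey_pairs_star = farey_pairs_pos"
proof (intro set_eqI iffI)
  fix P assume P: "P \<in> farey_pairs - farey_pairs_star"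
  obtain a b c d where P_eq: "P = ((a, b), (c, d))"
    by (metis prod.collapse)
  have "0 \<le> a" "0 \<le> c" "1 \<le> b" "1 \<le> d" "coprime a b" "c \<le> d" and det: "b * c - a * d = 1"
    using P by (auto simp: P_eq farey_pairs_def divide_le_eq)
  moreover have "a \<noteq> 0"
  proof
    assume "a = 0"
    with \<open>coprime a b\<close> \<open>1 \<le> b\<close> det have "b = 1" "c = 1"
      by auto
    with \<open>a = 0\<close> \<open>1 \<le> d\<close> have "P \<in> farey_pairs_star"
      by (auto simp: P_eq farey_pairs_star_def intro!: exI[of _ "nat d"])
    with P show False
      by simp
  qed
  moreover have "c \<noteq> 0"
  proof -
    have "0 \<le> a * d"
      using \<open>0 \<le> a\<close> \<open>1 \<le> d\<close> by simp
    with det show ?thesis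
      by auto
  qed
  moreover have "a < b"
  proof (rule ccontr)
    assume "\<not> a < b"
    then have "b * c \<le> a * d"
      using \<open>0 \<le> c\<close> \<open>c \<le> d\<close> \<open>1 \<le> b\<close> by (simp add: mult_mono)
    with det show False
      by simp
  qed
  ultimately show "P \<in> farey_pairs_pos"
    unfolding P_eq farey_pairs_pos_def by simp
next
  fix P assume "P \<in> farey_pairs_pos"
  then obtain a b c d where P_eq: "P = ((a, b), (c, d))"
    and "1 \<le> a" "a < b" "1 \<le> c" "c \<le> d" and det: "b * c - a * d = 1"
    by (auto simp: farey_pairs_pos_def)
  moreover have "real_of_int a / real_of_int b < real_of_int c / real_of_int d"
  proof -
    have "real_of_int a * real_of_int d < real_of_int c * real_of_int b"
      using det by (simp flip: of_int_mult add: algebra_simps)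
    with \<open>1 \<le> a\<close> \<open>a < b\<close> \<open>1 \<le> c\<close> \<open>c \<le> d\<close> show ?thesis
      by (simp add: field_simps)
  qed
  ultimately show "P \<in> farey_pairs - farey_pairs_star"
    using coprime_if_det_eq_one[OF det]
    by (auto simp: farey_pairs_def farey_pairs_star_def divide_le_eq)
qed

fun left_child :: "farey_pair \<Rightarrow> farey_pair" where
  "left_child ((a, b), (c, d)) = ((a, b), (a + c, b + d))"

fun right_child :: "farey_pair \<Rightarrow> farey_pair" where
  "right_child ((a, b), (c, d)) = ((a + c, b + d), (c, d))"

definition root_pair :: "nat \<Rightarrow> farey_pair" where
  "root_pair n = ((1, int n + 1), (1, int n))"

lemma left_child_mem: "P \<in> farey_pairs_pos \<Longrightarrow> left_child P \<in> farey_pairs_pos"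
  by (cases P) (auto simp: farey_pairs_pos_def algebra_simps)

lemma right_child_mem: "P \<in> farey_pairs_pos \<Longrightarrow> right_child P \<in> farey_pairs_pos"
  by (cases P) (auto simp: farey_pairs_pos_def algebra_simps)

lemma root_pair_mem: "1 \<le> n \<Longrightarrow> root_pair n \<in> farey_pairs_pos"
  by (simp add: root_pair_def farey_pairs_pos_def)

lemma inj_left_child: "inj left_child"
proof (rule injI)
  show "left_child P = left_child Q \<Longrightarrow> P = Q" for P Q
    by (cases P; cases Q) auto
qed

lemma inj_right_child: "inj right_child"
proof (rule injI)
  show "right_child P = right_child Q \<Longrightarrow> P = Q" for P Q
    by (cases P; cases Q) auto
qed

lemma inj_root_pair: "inj root_pair"
  by (rule injI) (simp add: root_pair_def)

lemma farey_pairs_pos_den_neq: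
  assumes "((a, b), (c, d)) \<in> farey_pairs_pos"
  shows "b \<noteq> d"
proof
  assume "b = d"
  with assms have "b * (c - a) = 1" "1 < b"
    by (auto simp: farey_pairs_pos_def algebra_simps)
  then show False
    by (simp add: pos_zmult_eq_1_iff)
qed

lemma left_parent_mem:
  assumes "((a, b), (c, d)) \<in> farey_pairs_pos" and "b < d"
  shows "((a, b), (c - a, d - b)) \<in> farey_pairs_pos"
proof -
  have "1 \<le> a" "a < b" "1 \<le> c" "c \<le> d" and det: "b * (c - a) = a * (d - b) + 1"
    using assms(1) by (auto simp: farey_pairs_pos_def algebra_simps)
  have "a * (d - b) > 0"
    using \<open>1 \<le> a\<close> \<open>b < d\<close> by simp
  with det have "b * (c - a) > 0"
    by linarith
  with \<open>1 \<le> a\<close> \<open>a < b\<close> have "a < c"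
    by (simp add: zero_less_mult_iff)
  have "a * (d - b) \<le> (b - 1) * (d - b)"
    using \<open>a < b\<close> \<open>b < d\<close> by (intro mult_right_mono) auto
  then have "b * (c - a) \<le> b * (d - b)"
    using det \<open>b < d\<close> by (simp add: algebra_simps)
  then have "c - a \<le> d - b"
    using \<open>1 \<le> a\<close> \<open>a < b\<close> by simp
  with \<open>1 \<le> a\<close> \<open>a < b\<close> \<open>a < c\<close> det show ?thesis
    by (simp add: farey_pairs_pos_def algebra_simps)
qed

lemma right_parent_mem:
  assumes "((a, b), (c, d)) \<in> farey_pairs_pos" and "d < b"
  shows "((a, b), (c, d)) = root_pair (nat d) \<or> ((a - c, b - d), (c, d)) \<in> farey_pairs_pos"
proof -
  have "1 \<le> a" "a < b" "1 \<le> c" "c \<le> d" and det: "(b - d) * c = (a - c) * d + 1"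
    using assms(1) by (auto simp: farey_pairs_pos_def algebra_simps)
  have "c \<le> (b - d) * c"
    using \<open>d < b\<close> \<open>1 \<le> c\<close> by simp
  with det \<open>1 \<le> c\<close> have "(a - c) * d \<ge> 0"
    by linarith
  with \<open>1 \<le> c\<close> \<open>c \<le> d\<close> have "c \<le> a"
    by (simp add: zero_le_mult_iff)
  show ?thesis
  proof (cases "a = c")
    case True
    with det \<open>d < b\<close> have "c = 1" "b = d + 1"
      by (simp_all add: pos_zmult_eq_1_iff)
    with True \<open>1 \<le> c\<close> \<open>c \<le> d\<close> show ?thesis
      by (simp add: root_pair_def)
  next
    case False
    have "a - c < b - d"
    proof (rule ccontr)
      assume "\<not> a - c < b - d"
      then have "(b - d) * c \<le> (a - c) * d"
        using \<open>d < b\<close> \<open>1 \<le> c\<close> \<open>c \<le> d\<close> by (intro mult_mono) auto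
      with det show False
        by simp
    qed
    with False \<open>c \<le> a\<close> \<open>1 \<le> c\<close> \<open>c \<le> d\<close> det show ?thesis
      by (simp add: farey_pairs_pos_def algebra_simps)
  qed
qed

definition farey_pairs_den_sum_le :: "nat \<Rightarrow> farey_pair set" where
  "farey_pairs_den_sum_le N = {((a, b), (c, d)) \<in> farey_pairs_pos. b + d \<le> int N}"

definition farey_pairs_den_max_le :: "nat \<Rightarrow> farey_pair set" where
  "farey_pairs_den_max_le N = {((a, b), (c, d)) \<in> farey_pairs_pos. max b d \<le> int N}"

lemma farey_pairs_den_max_le_subset:
  "farey_pairs_den_max_le N \<subseteq> ({1..int N} \<times> {1..int N}) \<times> ({1..int N} \<times> {1..int N})"
  by (auto simp: farey_pairs_den_max_le_def farey_pairs_pos_def)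

lemma finite_farey_pairs_den_max_le: "finite (farey_pairs_den_max_le N)"
  using farey_pairs_den_max_le_subset by (rule finite_subset) simp

lemma card_farey_pairs_den_max_le: "card (farey_pairs_den_max_le N) \<le> N ^ 4"
proof -
  have "card (farey_pairs_den_max_le N)
      \<le> card (({1..int N} \<times> {1..int N}) \<times> ({1..int N} \<times> {1..int N}))"
    using farey_pairs_den_max_le_subset by (rule card_mono[rotated]) simp
  also have "\<dots> = N ^ 4"
    by (simp add: card_cartesian_product power4_eq_xxxx)
  finally show ?thesis .
qed

lemma farey_pairs_den_sum_le_subset: "farey_pairs_den_sum_le N \<subseteq> farey_pairs_den_max_le N"
  by (auto simp: farey_pairs_den_sum_le_def farey_pairs_den_max_le_def farey_pairs_pos_def)

lemma farey_pairs_den_sum_le_subset_pos: "farey_pairs_den_sum_le N \<subseteq> farey_pairs_pos"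
  by (auto simp: farey_pairs_den_sum_le_def)

lemma finite_farey_pairs_den_sum_le: "finite (farey_pairs_den_sum_le N)"
  using finite_farey_pairs_den_max_le farey_pairs_den_sum_le_subset by (rule finite_subset[rotated])

lemma incseq_farey_pairs_den_sum_le: "incseq farey_pairs_den_sum_le"
  by (auto simp: incseq_def farey_pairs_den_sum_le_def)

lemma farey_pairs_den_sum_le_exhausting:
  assumes "finite X" "X \<subseteq> farey_pairs_pos"
  shows "\<exists>N. X \<subseteq> farey_pairs_den_sum_le N"
proof -
  obtain N where "\<forall>n \<in> (\<lambda>((a, b), (c, d)). nat (b + d)) ` X. n \<le> N"
    using assms(1) finite_nat_set_iff_bounded_le by blast
  with assms(2) have "X \<subseteq> farey_pairs_den_sum_le N"
    by (fastforce simp: farey_pairs_den_sum_le_def)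
  then show ?thesis ..
qed

lemma farey_pairs_den_max_le_eq:
  "farey_pairs_den_max_le N = root_pair ` {1..<N}
     \<union> left_child ` farey_pairs_den_sum_le N \<union> right_child ` farey_pairs_den_sum_le N"
proof (intro equalityI subsetI)
  fix Q assume Q: "Q \<in> farey_pairs_den_max_le N"
  obtain a b c d where Q_eq: "Q = ((a, b), (c, d))"
    by (metis prod.collapse)
  have Q_pos: "((a, b), (c, d)) \<in> farey_pairs_pos" and "b \<le> int N" "d \<le> int N"
    using Q by (auto simp: Q_eq farey_pairs_den_max_le_def)
  consider "b < d" | "d < b"
    using farey_pairs_pos_den_neq[OF Q_pos] by linarith
  then show "Q \<in> root_pair ` {1..<N} \<union> left_child ` farey_pairs_den_sum_le N
      \<union> right_child ` farey_pairs_den_sum_le N"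
  proof cases
    case 1
    with left_parent_mem[OF Q_pos] \<open>d \<le> int N\<close>
    have "((a, b), (c - a, d - b)) \<in> farey_pairs_den_sum_le N"
      by (simp add: farey_pairs_den_sum_le_def)
    moreover have "Q = left_child ((a, b), (c - a, d - b))"
      by (simp add: Q_eq)
    ultimately show ?thesis
      by blast
  next
    case 2
    have "1 \<le> d"
      using Q_pos by (simp add: farey_pairs_pos_def)
    from right_parent_mem[OF Q_pos 2] show ?thesis
    proof
      assume "((a, b), (c, d)) = root_pair (nat d)"
      moreover have "nat d \<in> {1..<N}"
        using \<open>1 \<le> d\<close> 2 \<open>b \<le> int N\<close> by auto
      ultimately show ?thesis
        by (auto simp: Q_eq)
    next
      assume "((a - c, b - d), (c, d)) \<in> farey_pairs_pos"
      with \<open>b \<le> int N\<close> have "((a - c, b - d), (c, d)) \<in> farey_pairs_den_sum_le N"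
        by (simp add: farey_pairs_den_sum_le_def)
      moreover have "Q = right_child ((a - c, b - d), (c, d))"
        by (simp add: Q_eq)
      ultimately show ?thesis
        by blast
    qed
  qed
next
  fix Q assume "Q \<in> root_pair ` {1..<N} \<union> left_child ` farey_pairs_den_sum_le N
      \<union> right_child ` farey_pairs_den_sum_le N"
  then show "Q \<in> farey_pairs_den_max_le N"
    using root_pair_mem left_child_mem right_child_mem
    by (fastforce simp: farey_pairs_den_max_le_def farey_pairs_den_sum_le_def root_pair_def
        farey_pairs_pos_def)
qed

lemma farey_children_disjoint:
  assumes "S \<subseteq> farey_pairs_pos"
  shows "root_pair ` I \<inter> left_child ` S = {}"
    "(root_pair ` I \<union> left_child ` S) \<inter> right_child ` S = {}"
proof -
  have "root_pair n \<noteq> left_child P" "root_pair n \<noteq> right_child P" "left_child Q \<noteq> right_child P"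
    if "P \<in> S" "Q \<in> S" for P Q n
    using subsetD[OF assms that(1)] subsetD[OF assms that(2)]
    by (cases P; cases Q; auto simp: root_pair_def farey_pairs_pos_def)+
  then show "root_pair ` I \<inter> left_child ` S = {}"
    "(root_pair ` I \<union> left_child ` S) \<inter> right_child ` S = {}"
    by blast+
qed

definition pair_potential :: "farey_pair \<Rightarrow> real" where
  "pair_potential P = (case P of ((a, b), (c, d)) \<Rightarrow>
     farey_potential ((real_of_int c / real_of_int d) / (real_of_int a / real_of_int b)))"

lemma farey_term_eq_pair_potential_diff:
  assumes "P \<in> farey_pairs_pos"
  shows "farey_term P
    = pair_potential P - pair_potential (left_child P) - pair_potential (right_child P)"
proof -
  obtain a b c d where P: "P = ((a, b), (c, d))" and "1 \<le> a" "a < b" "1 \<le> c" "c \<le> d"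
    and det: "b * c = a * d + 1"
    using assms by (auto simp: farey_pairs_pos_def algebra_simps)
  define A B C D
    where "A = real_of_int a" "B = real_of_int b" "C = real_of_int c" "D = real_of_int d"
  have pos: "0 < A" "0 < B" "0 < C" "0 < D"
    using \<open>1 \<le> a\<close> \<open>a < b\<close> \<open>1 \<le> c\<close> \<open>c \<le> d\<close> by (simp_all add: A_B_C_D_def)
  have det_real: "B * C = A * D + 1"
    unfolding A_B_C_D_def using det by (simp flip: of_int_mult of_int_add)
  define S T where "S = B + D" "T = A + C"
  have "0 < S" "0 < T"
    using pos by (simp_all add: S_T_def)
  define x y m where "x = A / B" "y = C / D" "m = T / S"
  \<comment> \<open>The determinant turns the gaps between x, m, y into unit fractions; once they are
    substituted, the remaining identity holds without any constraint on A, B, C, D.\<close>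
  have differences: "y - x = 1 / (B * D)" "m - x = 1 / (B * S)" "y - m = 1 / (D * S)"
    using pos det_real by (simp_all add: x_y_m_def S_T_def field_simps)
  have "pair_potential P - pair_potential (left_child P) - pair_potential (right_child P)
      = farey_potential (y / x) - farey_potential (m / x) - farey_potential (y / m)"
    by (simp add: P pair_potential_def x_y_m_def A_B_C_D_def S_T_def)
  also have "\<dots> = (y - x) * (m - x) * (y - m) * (x * (y - m)\<^sup>2 + y * (m - x)\<^sup>2 + m * (y - x)\<^sup>2)
      / (x * y * m)\<^sup>2"
    using pos \<open>0 < S\<close> \<open>0 < T\<close> by (intro farey_potential_cocycle) (simp_all add: x_y_m_def)
  also have "\<dots> = (A * B + C * D + T * S) / (A * B * C * D * T * S)\<^sup>2"
    unfolding differences unfolding x_y_m_def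
    using pos \<open>0 < S\<close> \<open>0 < T\<close> by (simp add: field_simps power2_eq_square)
  also have "\<dots> = farey_term P"
    by (simp add: P farey_term_def A_B_C_D_def S_T_def)
  finally show ?thesis ..
qed

lemma farey_term_nonneg: "P \<in> farey_pairs_pos \<Longrightarrow> 0 \<le> farey_term P"
  by (auto simp: farey_pairs_pos_def farey_term_def simp flip: of_int_mult of_int_add)

lemma pair_potential_eq:
  assumes "((a, b), (c, d)) \<in> farey_pairs_pos"
  shows "pair_potential ((a, b), (c, d)) = farey_potential (1 + 1 / real_of_int (a * d))"
proof -
  have "1 \<le> a" "a < b" "1 \<le> c" "c \<le> d" and det: "b * c = a * d + 1"
    using assms by (auto simp: farey_pairs_pos_def algebra_simps)
  then have "real_of_int b * real_of_int c = real_of_int a * real_of_int d + 1"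
    by (simp flip: of_int_mult of_int_add)
  with \<open>1 \<le> a\<close> \<open>a < b\<close> \<open>1 \<le> c\<close> \<open>c \<le> d\<close>
  have "(real_of_int c / real_of_int d) / (real_of_int a / real_of_int b)
      = 1 + 1 / real_of_int (a * d)"
    by (simp add: field_simps)
  then show ?thesis
    by (simp add: pair_potential_def)
qed

lemma pair_potential_nonneg:
  assumes "P \<in> farey_pairs_pos"
  shows "0 \<le> pair_potential P"
proof -
  obtain a b c d where P: "P = ((a, b), (c, d))"
    by (metis prod.collapse)
  with assms have "0 < a * d"
    by (simp add: farey_pairs_pos_def)
  then have "0 \<le> farey_potential (1 + 1 / real_of_int (a * d))"
    by (intro farey_potential_nonneg) (simp del: of_int_mult)
  with assms show ?thesis
    by (simp add: P pair_potential_eq)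
qed

lemma pair_potential_boundary_le:
  assumes "Q \<in> farey_pairs_den_max_le N - farey_pairs_den_sum_le N"
  shows "pair_potential Q \<le> (2 / real N) ^ 5"
proof -
  obtain a b c d where Q: "Q = ((a, b), (c, d))"
    by (metis prod.collapse)
  have Q_pos: "((a, b), (c, d)) \<in> farey_pairs_pos" and "b \<le> int N" "d \<le> int N" "int N < b + d"
    using assms by (auto simp: Q farey_pairs_den_max_le_def farey_pairs_den_sum_le_def)
  then have "1 \<le> a" "a < b" "1 \<le> c" "c \<le> d" and det: "b * c = a * d + 1"
    by (auto simp: farey_pairs_pos_def algebra_simps)
  have "b \<le> b * c" "d \<le> a * d"
    using \<open>1 \<le> a\<close> \<open>a < b\<close> \<open>1 \<le> c\<close> \<open>c \<le> d\<close> by simp_all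
  with det \<open>int N < b + d\<close> have "int N \<le> 2 * (a * d)"
    by linarith
  then have N_le: "real N \<le> 2 * real_of_int (a * d)"
    by (metis of_int_le_iff of_int_mult of_int_numeral of_int_of_nat_eq)
  have "0 < real N"
    using \<open>1 \<le> a\<close> \<open>a < b\<close> \<open>b \<le> int N\<close> by simp
  with N_le have "0 < real_of_int (a * d)"
    by linarith
  with N_le \<open>0 < real N\<close> have "1 / real_of_int (a * d) \<le> 2 / real N"
    by (simp add: field_simps del: of_int_mult)
  have "pair_potential Q = farey_potential (1 + 1 / real_of_int (a * d))"
    unfolding Q by (rule pair_potential_eq[OF Q_pos])
  also have "\<dots> \<le> (1 / real_of_int (a * d)) ^ 5"
    using farey_potential_le[of "1 + 1 / real_of_int (a * d)"] \<open>0 < real_of_int (a * d)\<close> by simp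
  also have "\<dots> \<le> (2 / real N) ^ 5"
    using \<open>1 / real_of_int (a * d) \<le> 2 / real N\<close> \<open>0 < real_of_int (a * d)\<close> by (simp add: power_mono)
  finally show ?thesis .
qed

lemma sum_pair_potential_boundary_le:
  "sum pair_potential (farey_pairs_den_max_le N - farey_pairs_den_sum_le N) \<le> 32 / real N"
proof -
  let ?B = "farey_pairs_den_max_le N - farey_pairs_den_sum_le N"
  have "sum pair_potential ?B \<le> real (card ?B) * (2 / real N) ^ 5"
    using sum_bounded_above[of ?B pair_potential] pair_potential_boundary_le by fastforce
  also have "\<dots> \<le> real (N ^ 4) * (2 / real N) ^ 5"
  proof (intro mult_right_mono)
    have "card ?B \<le> card (farey_pairs_den_max_le N)"
      by (intro card_mono finite_farey_pairs_den_max_le) blast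
    then show "real (card ?B) \<le> real (N ^ 4)"
      using card_farey_pairs_den_max_le[of N] by linarith
  qed simp
  also have "\<dots> = 32 / real N"
    by (cases "N = 0") (simp_all add: power_divide eval_nat_numeral)
  finally show ?thesis .
qed

lemma tendsto_sum_pair_potential_boundary:
  "(\<lambda>N. sum pair_potential (farey_pairs_den_max_le N - farey_pairs_den_sum_le N)) \<longlonglongrightarrow> 0"
proof (rule tendsto_sandwich[OF _ _ tendsto_const lim_const_over_n])
  show "\<forall>\<^sub>F N in sequentially.
      0 \<le> sum pair_potential (farey_pairs_den_max_le N - farey_pairs_den_sum_le N)"
    by (intro always_eventually allI sum_nonneg pair_potential_nonneg)
      (auto simp: farey_pairs_den_max_le_def)
  show "\<forall>\<^sub>F N in sequentially.
      sum pair_potential (farey_pairs_den_max_le N - farey_pairs_den_sum_le N) \<le> 32 / real N"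
    by (intro always_eventually allI sum_pair_potential_boundary_le)
qed

lemma pair_potential_root_pair:
  "pair_potential (root_pair n) = farey_potential ((real n + 1) / real n)"
  by (simp add: pair_potential_def root_pair_def)

lemma tendsto_sum_pair_potential_root_pair:
  "(\<lambda>N. \<Sum>n = 1..<N. pair_potential (root_pair n)) \<longlonglongrightarrow> 7 - 12 * euler_mascheroni"
proof (rule LIMSEQ_imp_Suc)
  have shift: "(\<Sum>n = 1..<Suc N. pair_potential (root_pair n))
      = (\<Sum>k<N. pair_potential (root_pair (Suc k)))" for N
    by (induction N) (simp_all add: sum.atLeastLessThan_Suc)
  show "(\<lambda>N. \<Sum>n = 1..<Suc N. pair_potential (root_pair n)) \<longlonglongrightarrow> 7 - 12 * euler_mascheroni"
    unfolding shift using sums_farey_potential_succ_div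
    by (simp add: sums_def pair_potential_root_pair add_ac)
qed

lemma sum_farey_term_den_sum_le:
  "sum farey_term (farey_pairs_den_sum_le N) = (\<Sum>n = 1..<N. pair_potential (root_pair n))
     - sum pair_potential (farey_pairs_den_max_le N - farey_pairs_den_sum_le N)"
proof -
  let ?S = "farey_pairs_den_sum_le N" and ?M = "farey_pairs_den_max_le N"
  have S_pos: "?S \<subseteq> farey_pairs_pos"
    by (rule farey_pairs_den_sum_le_subset_pos)
  have "sum farey_term ?S
      = (\<Sum>P\<in>?S. pair_potential P - pair_potential (left_child P) - pair_potential (right_child P))"
    using S_pos by (intro sum.cong) (auto simp: farey_term_eq_pair_potential_diff)
  also have "\<dots> = sum pair_potential ?S
      - sum (pair_potential \<circ> left_child) ?S - sum (pair_potential \<circ> right_child) ?S"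
    by (simp add: sum_subtractf)
  also have "\<dots> = sum pair_potential ?S
      - sum pair_potential (left_child ` ?S) - sum pair_potential (right_child ` ?S)"
    using inj_left_child inj_right_child by (simp add: sum.reindex inj_on_subset)
  finally have children: "sum farey_term ?S = sum pair_potential ?S
      - sum pair_potential (left_child ` ?S) - sum pair_potential (right_child ` ?S)" .
  note disjoint = farey_children_disjoint[OF S_pos, of "{1..<N}"]
  have "sum pair_potential ?M
      = sum pair_potential (root_pair ` {1..<N} \<union> left_child ` ?S)
        + sum pair_potential (right_child ` ?S)"
    unfolding farey_pairs_den_max_le_eq
    using disjoint(2) finite_farey_pairs_den_sum_le by (intro sum.union_disjoint) auto
  also have "sum pair_potential (root_pair ` {1..<N} \<union> left_child ` ?S)
      = sum pair_potential (root_pair ` {1..<N}) + sum pair_potential (left_child ` ?S)"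
    using disjoint(1) finite_farey_pairs_den_sum_le by (intro sum.union_disjoint) auto
  also have "sum pair_potential (root_pair ` {1..<N}) = (\<Sum>n = 1..<N. pair_potential (root_pair n))"
    using inj_root_pair by (simp add: sum.reindex inj_on_subset)
  finally have parents: "sum pair_potential ?M = (\<Sum>n = 1..<N. pair_potential (root_pair n))
      + sum pair_potential (left_child ` ?S) + sum pair_potential (right_child ` ?S)" .
  have "sum pair_potential (?M - ?S) = sum pair_potential ?M - sum pair_potential ?S"
    using finite_farey_pairs_den_max_le farey_pairs_den_sum_le_subset by (rule sum_diff)
  with children parents show ?thesis
    by simp
qed

lemma tendsto_sum_farey_term_den_sum_le:
  "(\<lambda>N. sum farey_term (farey_pairs_den_sum_le N)) \<longlonglongrightarrow> 7 - 12 * euler_mascheroni"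
  unfolding sum_farey_term_den_sum_le
  using tendsto_diff[OF tendsto_sum_pair_potential_root_pair tendsto_sum_pair_potential_boundary]
  by simp

theorem theorem13:
  shows "(farey_term has_sum (7 - 12 * (euler_mascheroni :: real)))
           (farey_pairs - farey_pairs_star)"
  unfolding farey_pairs_diff_star
  by (rule has_sum_nonneg_exhaustion[OF farey_term_nonneg finite_farey_pairs_den_sum_le
        farey_pairs_den_sum_le_subset_pos incseq_farey_pairs_den_sum_le
        farey_pairs_den_sum_le_exhausting tendsto_sum_farey_term_den_sum_le])

end
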